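(* Let $1/n\ll \nu\ll \lambda\ll 1$. Let $K_{2n+1}$ be 2-factorized. Suppose that $X,V\subseteq V(K_{2n+1})$ are disjoint, $(X,V)$ is $(10\nu n)$-replete and $|X|\leq \lambda n$. Suppose that $C\subseteq C(K_{2n+1})$ is such that every vertex $v\in V(K_{2n+1})$ has at least $3\lambda n$ neighbours in $V$ joined to $v$ by edges with colour in $C$. Then, for any set $C'\subseteq C(K_{2n+1})$ of at most $\nu n$ colours, there is a perfect $(C'\cup C)$-rainbow matching from $X$ to $V$ which uses every colour in $C'$.
   Context: A 2-factorization of $K_{2n+1}$ is an edge-colouring in which every vertex is incident to exactly 2 edges of each colour; $C(K_{2n+1})$ is its colour set. For disjoint $W,Y$, $(W,Y)$ is $\ell$-replete if for every colour at least $\ell$ edges of that colour join $W$ to $Y$. A perfect $D$-rainbow matching from $X$ to $V$ is a matching covering every vertex of $X$, each edge joining $X$ to $V$, with distinct colours all in $D$. $a\ll b$ means the statement holds whenever $a\le b^K/K$ for a suitable fixed absolute constant $K$ per relation; $1/n\ll\cdots$ entails $n$ large. *)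

theory Defs
  imports Main Complex_Main
begin

text \<open>Vertices of K_N are 0..N-1 (N = 2n+1); an edge colouring is a function
  col :: nat => nat => nat, where col u v is the colour of edge uv (u \<noteq> v).\<close>

definition colour_set :: "nat \<Rightarrow> (nat \<Rightarrow> nat \<Rightarrow> nat) \<Rightarrow> nat set" where
  "colour_set N col = {col u v | u v. u < N \<and> v < N \<and> u \<noteq> v}"

definition two_factorization :: "nat \<Rightarrow> (nat \<Rightarrow> nat \<Rightarrow> nat) \<Rightarrow> bool" where
  "two_factorization N col \<longleftrightarrow>
     (\<forall>u<N. \<forall>v<N. u \<noteq> v \<longrightarrow> col u v = col v u) \<and>
     (\<forall>v<N. \<forall>c\<in>colour_set N col. card {u. u < N \<and> u \<noteq> v \<and> col v u = c} = 2)"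

text \<open>(W,Y) is l-replete: every colour has at least l edges joining W to Y
  (W, Y disjoint, so edges correspond to ordered pairs (w,y) with w in W, y in Y).\<close>
definition replete :: "nat \<Rightarrow> (nat \<Rightarrow> nat \<Rightarrow> nat) \<Rightarrow> real \<Rightarrow> nat set \<Rightarrow> nat set \<Rightarrow> bool" where
  "replete N col l W Y \<longleftrightarrow>
     (\<forall>c\<in>colour_set N col. real (card {(w, y). w \<in> W \<and> y \<in> Y \<and> col w y = c}) \<ge> l)"

definition perfect_rainbow_matching ::
  "(nat \<Rightarrow> nat \<Rightarrow> nat) \<Rightarrow> nat set \<Rightarrow> nat set \<Rightarrow> nat set \<Rightarrow> (nat \<times> nat) set \<Rightarrow> bool" where
  "perfect_rainbow_matching col D X V M \<longleftrightarrow>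
     M \<subseteq> X \<times> V \<and>
     (\<forall>x\<in>X. \<exists>!y. (x, y) \<in> M) \<and>
     (\<forall>y\<in>V. \<forall>x1 x2. (x1, y) \<in> M \<longrightarrow> (x2, y) \<in> M \<longrightarrow> x1 = x2) \<and>
     inj_on (\<lambda>(x, y). col x y) M \<and>
     (\<lambda>(x, y). col x y) ` M \<subseteq> D"

end

(*
  Both parts of the matching are built greedily. The colours of C' are realised
  one at a time: every vertex lies on exactly two edges of each colour, so the
  fewer than |C'| edges chosen so far block at most 4(|C'| - 1) of the at least
  10 nu n >= 4 |C'| edges of the next colour between X and V. The vertices of X
  still uncovered are then matched one at a time by C-coloured edges: for such a
  vertex x, the used vertices of V together with the two neighbours of x along
  each used colour block fewer than 3 |X| <= 3 lam n of its C-neighbours in V.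
  No relation between n, nu and lam is needed, so K1 = K2 = K3 = 1 will do.
*)
theory Submission
  imports Defs
begin

lemma two_factorization_sym:
  assumes "two_factorization N col" "u < N" "v < N" "u \<noteq> v"
  shows "col u v = col v u"
  using assms unfolding two_factorization_def by blast

lemma card_colour_class_neighbours:
  assumes "two_factorization N col" "u < N" "c \<in> colour_set N col"
  shows "card {v. v < N \<and> v \<noteq> u \<and> col u v = c} = 2"
  using assms unfolding two_factorization_def by blast

lemma finite_colour_set: "finite (colour_set N col)"
proof -
  have "colour_set N col \<subseteq> case_prod col ` ({..<N} \<times> {..<N})"
    unfolding colour_set_def by auto
  then show ?thesis
    by (rule finite_subset) simp
qed

lemma card_colour_class_star:
  assumes "two_factorization N col" "finite W" "W \<subseteq> {..<N}" "c \<in> colour_set N col"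
  shows "card (SIGMA u:W. {v. v < N \<and> v \<noteq> u \<and> col u v = c}) = 2 * card W"
proof -
  have "card (SIGMA u:W. {v. v < N \<and> v \<noteq> u \<and> col u v = c})
      = (\<Sum>u\<in>W. card {v. v < N \<and> v \<noteq> u \<and> col u v = c})"
    using assms(2) by (rule card_SigmaI) simp
  also have "\<dots> = (\<Sum>u\<in>W. 2)"
  proof (rule sum.cong)
    fix u
    assume "u \<in> W"
    with assms show "card {v. v < N \<and> v \<noteq> u \<and> col u v = c} = 2"
      by (intro card_colour_class_neighbours) auto
  qed (rule refl)
  finally show ?thesis
    by simp
qed

lemma card_neighbours_via_colours:
  assumes "two_factorization N col" "u < N" "finite S" "S \<subseteq> colour_set N col"
  shows "card {v. v < N \<and> v \<noteq> u \<and> col u v \<in> S} = 2 * card S"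
proof -
  have "{v. v < N \<and> v \<noteq> u \<and> col u v \<in> S} = (\<Union>c\<in>S. {v. v < N \<and> v \<noteq> u \<and> col u v = c})"
    by blast
  also have "card \<dots> = (\<Sum>c\<in>S. card {v. v < N \<and> v \<noteq> u \<and> col u v = c})"
    using assms(3) by (intro card_UN_disjoint) auto
  also have "\<dots> = (\<Sum>c\<in>S. 2)"
  proof (rule sum.cong)
    fix c
    assume "c \<in> S"
    with assms show "card {v. v < N \<and> v \<noteq> u \<and> col u v = c} = 2"
      by (intro card_colour_class_neighbours) auto
  qed (rule refl)
  finally show ?thesis
    by simp
qed

definition rainbow_matching ::
  "(nat \<Rightarrow> nat \<Rightarrow> nat) \<Rightarrow> nat set \<Rightarrow> nat set \<Rightarrow> nat set \<Rightarrow> (nat \<times> nat) set \<Rightarrow> bool" where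
  "rainbow_matching col D X V M \<longleftrightarrow>
     finite M \<and> M \<subseteq> X \<times> V \<and> inj_on fst M \<and> inj_on snd M \<and>
     inj_on (case_prod col) M \<and> case_prod col ` M \<subseteq> D"

lemma rainbow_matching_empty: "rainbow_matching col D X V {}"
  unfolding rainbow_matching_def by simp

lemma rainbow_matching_mono:
  "rainbow_matching col D X V M \<Longrightarrow> D \<subseteq> D' \<Longrightarrow> rainbow_matching col D' X V M"
  unfolding rainbow_matching_def by blast

lemma rainbow_matching_insert:
  assumes "rainbow_matching col D X V M" "x \<in> X" "y \<in> V"
    "x \<notin> fst ` M" "y \<notin> snd ` M" "col x y \<notin> case_prod col ` M" "col x y \<in> D"
  shows "rainbow_matching col D X V (insert (x, y) M)"
proof -
  have "(x, y) \<notin> M"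
    using assms(4) by force
  with assms show ?thesis
    unfolding rainbow_matching_def by (simp add: inj_on_insert)
qed

lemma rainbow_matching_colours:
  assumes "rainbow_matching col D X V M" "X \<subseteq> {..<N}" "V \<subseteq> {..<N}" "X \<inter> V = {}"
  shows "case_prod col ` M \<subseteq> colour_set N col"
proof
  fix c
  assume "c \<in> case_prod col ` M"
  then obtain x y where "(x, y) \<in> M" "c = col x y"
    by auto
  moreover have "x \<in> X" "y \<in> V"
    using assms(1) \<open>(x, y) \<in> M\<close> unfolding rainbow_matching_def by auto
  ultimately show "c \<in> colour_set N col"
    using assms(2-4) unfolding colour_set_def by blast
qed

lemma perfect_rainbow_matchingI:
  assumes "rainbow_matching col D X V M" "X \<subseteq> fst ` M"
  shows "perfect_rainbow_matching col D X V M"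
proof -
  have inj_fst: "inj_on fst M" and inj_snd: "inj_on snd M"
    using assms(1) unfolding rainbow_matching_def by simp_all
  have "\<exists>!y. (x, y) \<in> M" if "x \<in> X" for x
  proof -
    obtain p where p: "p \<in> M" "x = fst p"
      using assms(2) \<open>x \<in> X\<close> by blast
    show ?thesis
    proof (rule ex1I)
      show "(x, snd p) \<in> M"
        using p by simp
      show "y = snd p" if "(x, y) \<in> M" for y
      proof -
        have "(x, y) = p"
          using p(2) by (intro inj_onD[OF inj_fst _ that p(1)]) simp
        then show ?thesis
          by auto
      qed
    qed
  qed
  moreover have "\<forall>y\<in>V. \<forall>x1 x2. (x1, y) \<in> M \<longrightarrow> (x2, y) \<in> M \<longrightarrow> x1 = x2"
    using inj_onD[OF inj_snd] by fastforce
  ultimately show ?thesis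
    using assms(1) unfolding rainbow_matching_def perfect_rainbow_matching_def
    by (intro conjI ballI) simp_all
qed

lemma card_colour_edges_from_le:
  assumes tf: "two_factorization N col"
    and "A \<subseteq> {..<N}" "V \<subseteq> {..<N}" "A \<inter> V = {}" "c \<in> colour_set N col"
  shows "card {(x, y). x \<in> A \<and> y \<in> V \<and> col x y = c} \<le> 2 * card A"
proof -
  have "finite A"
    using assms(2) finite_subset by blast
  have "{(x, y). x \<in> A \<and> y \<in> V \<and> col x y = c}
      \<subseteq> (SIGMA x:A. {y. y < N \<and> y \<noteq> x \<and> col x y = c})"
    using assms(3,4) by auto
  moreover have "finite (SIGMA x:A. {y. y < N \<and> y \<noteq> x \<and> col x y = c})"
    using \<open>finite A\<close> by simp
  ultimately have "card {(x, y). x \<in> A \<and> y \<in> V \<and> col x y = c}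
      \<le> card (SIGMA x:A. {y. y < N \<and> y \<noteq> x \<and> col x y = c})"
    by (simp add: card_mono)
  also have "\<dots> = 2 * card A"
    using card_colour_class_star[OF tf \<open>finite A\<close> assms(2,5)] .
  finally show ?thesis .
qed

lemma card_colour_edges_to_le:
  assumes tf: "two_factorization N col"
    and "X \<subseteq> {..<N}" "B \<subseteq> {..<N}" "X \<inter> B = {}" "c \<in> colour_set N col"
  shows "card {(x, y). x \<in> X \<and> y \<in> B \<and> col x y = c} \<le> 2 * card B"
proof -
  have "col y x = col x y" if "x \<in> X" "y \<in> B" for x y
    using two_factorization_sym[OF tf, of y x] that assms(2-4) by auto
  then have "{(x, y). x \<in> X \<and> y \<in> B \<and> col x y = c}
      = prod.swap ` {(y, x). y \<in> B \<and> x \<in> X \<and> col y x = c}"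
    by (force simp: image_iff)
  also have "card \<dots> \<le> card {(y, x). y \<in> B \<and> x \<in> X \<and> col y x = c}"
    by (rule card_image_le, rule finite_subset[of _ "B \<times> X"])
      (use finite_subset[OF assms(2)] finite_subset[OF assms(3)] in auto)
  also have "\<dots> \<le> 2 * card B"
    using assms by (intro card_colour_edges_from_le) auto
  finally show ?thesis .
qed

lemma ex_free_edge_of_colour:
  assumes tf: "two_factorization N col"
    and XN: "X \<subseteq> {..<N}" and VN: "V \<subseteq> {..<N}" and disj: "X \<inter> V = {}"
    and c: "c \<in> colour_set N col" and M: "finite M" "M \<subseteq> X \<times> V"
    and many: "4 * card M < card {(x, y). x \<in> X \<and> y \<in> V \<and> col x y = c}"
  shows "\<exists>x\<in>X. \<exists>y\<in>V. col x y = c \<and> x \<notin> fst ` M \<and> y \<notin> snd ` M"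
proof (rule ccontr)
  let ?from = "{(x, y). x \<in> fst ` M \<and> y \<in> V \<and> col x y = c}"
  let ?to = "{(x, y). x \<in> X \<and> y \<in> snd ` M \<and> col x y = c}"
  have fstM: "fst ` M \<subseteq> X" and sndM: "snd ` M \<subseteq> V"
    using M(2) by auto
  assume "\<not> ?thesis"
  then have "{(x, y). x \<in> X \<and> y \<in> V \<and> col x y = c} \<subseteq> ?from \<union> ?to"
    by blast
  moreover have "finite (X \<times> V)"
    using finite_subset[OF XN] finite_subset[OF VN] by simp
  then have "finite (?from \<union> ?to)"
    by (rule finite_subset[rotated]) (use fstM sndM in blast)
  ultimately have "card {(x, y). x \<in> X \<and> y \<in> V \<and> col x y = c} \<le> card (?from \<union> ?to)"
    by (simp add: card_mono)
  also have "\<dots> \<le> card ?from + card ?to"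
    by (rule card_Un_le)
  also have "\<dots> \<le> 2 * card (fst ` M) + 2 * card (snd ` M)"
  proof (rule add_mono)
    show "card ?from \<le> 2 * card (fst ` M)"
      using fstM XN VN disj by (intro card_colour_edges_from_le[OF tf _ VN _ c]) auto
    show "card ?to \<le> 2 * card (snd ` M)"
      using sndM XN VN disj by (intro card_colour_edges_to_le[OF tf XN _ _ c]) auto
  qed
  also have "\<dots> \<le> 4 * card M"
    using card_image_le[OF M(1), of fst] card_image_le[OF M(1), of snd] by simp
  finally show False
    using many by simp
qed

lemma ex_free_neighbour:
  assumes tf: "two_factorization N col" and x: "x < N" and VN: "V \<subseteq> {..<N}"
    and M: "finite M" "case_prod col ` M \<subseteq> colour_set N col"
    and many: "3 * card M < card {u \<in> V. u \<noteq> x \<and> col x u \<in> C}"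
  shows "\<exists>u\<in>V. u \<noteq> x \<and> col x u \<in> C \<and> u \<notin> snd ` M \<and> col x u \<notin> case_prod col ` M"
proof (rule ccontr)
  define blocked where
    "blocked = snd ` M \<union> {u. u < N \<and> u \<noteq> x \<and> col x u \<in> case_prod col ` M}"
  assume "\<not> ?thesis"
  then have "{u \<in> V. u \<noteq> x \<and> col x u \<in> C} \<subseteq> blocked"
    using VN unfolding blocked_def by blast
  moreover have "finite blocked"
    unfolding blocked_def using M(1) by simp
  ultimately have "card {u \<in> V. u \<noteq> x \<and> col x u \<in> C} \<le> card blocked"
    by (simp add: card_mono)
  also have "\<dots> \<le> card (snd ` M) + card {u. u < N \<and> u \<noteq> x \<and> col x u \<in> case_prod col ` M}"
    unfolding blocked_def by (rule card_Un_le)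
  also have "\<dots> = card (snd ` M) + 2 * card (case_prod col ` M)"
    using card_neighbours_via_colours[OF tf x _ M(2)] M(1) by simp
  also have "\<dots> \<le> 3 * card M"
    using card_image_le[OF M(1), of snd] card_image_le[OF M(1), of "case_prod col"] by simp
  finally show False
    using many by simp
qed

lemma ex_rainbow_matching_with_colours:
  assumes tf: "two_factorization N col"
    and XN: "X \<subseteq> {..<N}" and VN: "V \<subseteq> {..<N}" and disj: "X \<inter> V = {}"
    and "finite F" "F \<subseteq> colour_set N col"
    and "\<forall>c\<in>F. 4 * card F \<le> card {(x, y). x \<in> X \<and> y \<in> V \<and> col x y = c}"
  shows "\<exists>M. rainbow_matching col F X V M \<and> case_prod col ` M = F"
  using assms(5-7)
proof (induction F rule: finite_induct)
  case empty
  show ?case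
    using rainbow_matching_empty by blast
next
  case (insert c F)
  have "card F \<le> card (insert c F)"
    by (rule card_insert_le)
  then have "\<forall>c\<in>F. 4 * card F \<le> card {(x, y). x \<in> X \<and> y \<in> V \<and> col x y = c}"
    using insert.prems(2) by fastforce
  then obtain M where M: "rainbow_matching col F X V M" "case_prod col ` M = F"
    using insert.IH insert.prems(1) by blast
  have fin: "finite M" and sub: "M \<subseteq> X \<times> V" and inj: "inj_on (case_prod col) M"
    using M(1) unfolding rainbow_matching_def by simp_all
  have "card M = card F"
    using card_image[OF inj] M(2) by simp
  then have "4 * card M < card {(x, y). x \<in> X \<and> y \<in> V \<and> col x y = c}"
    using insert.prems(2) insert.hyps by fastforce
  then obtain x y where xy: "x \<in> X" "y \<in> V" "col x y = c" "x \<notin> fst ` M" "y \<notin> snd ` M"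
    using ex_free_edge_of_colour[OF tf XN VN disj _ fin sub] insert.prems(1) by blast
  have "rainbow_matching col (insert c F) X V M"
    using M(1) by (rule rainbow_matching_mono) blast
  then have "rainbow_matching col (insert c F) X V (insert (x, y) M)"
    using xy M(2) insert.hyps(2) by (intro rainbow_matching_insert) simp_all
  moreover have "case_prod col ` insert (x, y) M = insert c F"
    using xy(3) M(2) by simp
  ultimately show ?case
    by blast
qed

lemma rainbow_matching_cover_vertex:
  assumes tf: "two_factorization N col"
    and XN: "X \<subseteq> {..<N}" and VN: "V \<subseteq> {..<N}" and disj: "X \<inter> V = {}"
    and M: "rainbow_matching col D X V M" and "C \<subseteq> D"
    and x: "x \<in> X" "x \<notin> fst ` M"
    and many: "3 * card X \<le> card {u \<in> V. u \<noteq> x \<and> col x u \<in> C}"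
  shows "\<exists>u. rainbow_matching col D X V (insert (x, u) M)"
proof -
  have fin: "finite M" and sub: "M \<subseteq> X \<times> V" and inj: "inj_on fst M"
    using M unfolding rainbow_matching_def by simp_all
  have "card M = card (fst ` M)"
    using card_image[OF inj] by simp
  also have "\<dots> < card X"
    using sub x finite_subset[OF XN finite_lessThan] by (intro psubset_card_mono) auto
  finally have "3 * card M < card {u \<in> V. u \<noteq> x \<and> col x u \<in> C}"
    using many by linarith
  then obtain u where "u \<in> V" "col x u \<in> C" "u \<notin> snd ` M" "col x u \<notin> case_prod col ` M"
    using ex_free_neighbour[OF tf _ VN fin rainbow_matching_colours[OF M XN VN disj]] x(1) XN
    by blast
  then have "rainbow_matching col D X V (insert (x, u) M)"
    using M x \<open>C \<subseteq> D\<close> by (intro rainbow_matching_insert) auto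
  then show ?thesis ..
qed

lemma rainbow_matching_extend_to_cover:
  assumes tf: "two_factorization N col"
    and XN: "X \<subseteq> {..<N}" and VN: "V \<subseteq> {..<N}" and disj: "X \<inter> V = {}"
    and M0: "rainbow_matching col D X V M0" and "C \<subseteq> D"
    and many: "\<forall>x\<in>X. 3 * card X \<le> card {u \<in> V. u \<noteq> x \<and> col x u \<in> C}"
  shows "\<exists>M. rainbow_matching col D X V M \<and> M0 \<subseteq> M \<and> X \<subseteq> fst ` M"
proof -
  have "\<exists>M. rainbow_matching col D X V M \<and> M0 \<subseteq> M \<and> T \<subseteq> fst ` M" if "T \<subseteq> X" for T
    using finite_subset[OF that finite_subset[OF XN finite_lessThan]] that
  proof (induction T rule: finite_induct)
    case empty
    show ?case
      using M0 by blast
  next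
    case (insert x T)
    obtain M where M: "rainbow_matching col D X V M" "M0 \<subseteq> M" "T \<subseteq> fst ` M"
      using insert.IH insert.prems by blast
    show ?case
    proof (cases "x \<in> fst ` M")
      case True
      then show ?thesis
        using M by blast
    next
      case False
      have "x \<in> X"
        using insert.prems by simp
      then obtain u where "rainbow_matching col D X V (insert (x, u) M)"
        using rainbow_matching_cover_vertex[OF tf XN VN disj M(1) \<open>C \<subseteq> D\<close> _ False] many
        by blast
      moreover have "insert x T \<subseteq> fst ` insert (x, u) M"
        using M(3) by auto
      ultimately show ?thesis
        using M(2) by blast
    qed
  qed
  then show ?thesis
    by blast
qed

theorem ex_perfect_rainbow_matching_using_colours:
  assumes tf: "two_factorization N col"
    and XN: "X \<subseteq> {..<N}" and VN: "V \<subseteq> {..<N}" and disj: "X \<inter> V = {}"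
    and C': "C' \<subseteq> colour_set N col"
      "\<forall>c\<in>C'. 4 * card C' \<le> card {(x, y). x \<in> X \<and> y \<in> V \<and> col x y = c}"
    and C: "\<forall>x\<in>X. 3 * card X \<le> card {u \<in> V. u \<noteq> x \<and> col x u \<in> C}"
  shows "\<exists>M. perfect_rainbow_matching col (C' \<union> C) X V M \<and> C' \<subseteq> case_prod col ` M"
proof -
  obtain M0 where M0: "rainbow_matching col C' X V M0" "case_prod col ` M0 = C'"
    using ex_rainbow_matching_with_colours[OF tf XN VN disj
        finite_subset[OF C'(1) finite_colour_set] C'] by blast
  have "rainbow_matching col (C' \<union> C) X V M0"
    using M0(1) by (rule rainbow_matching_mono) blast
  then obtain M where "rainbow_matching col (C' \<union> C) X V M" "M0 \<subseteq> M" "X \<subseteq> fst ` M"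
    using rainbow_matching_extend_to_cover[OF tf XN VN disj _ _ C] by blast
  then show ?thesis
    using M0(2) perfect_rainbow_matchingI by blast
qed

lemma ex_perfect_rainbow_matching_if_replete:
  assumes tf: "two_factorization N col"
    and XN: "X \<subseteq> {..<N}" and VN: "V \<subseteq> {..<N}" and disj: "X \<inter> V = {}"
    and rep: "replete N col (10 * \<nu> * real n) X V"
    and X: "real (card X) \<le> lam * real n"
    and C: "\<forall>v<N. real (card {u \<in> V. u \<noteq> v \<and> col v u \<in> C}) \<ge> 3 * lam * real n"
    and C': "C' \<subseteq> colour_set N col" "real (card C') \<le> \<nu> * real n"
  shows "\<exists>M. perfect_rainbow_matching col (C' \<union> C) X V M \<and> C' \<subseteq> case_prod col ` M"
proof (rule ex_perfect_rainbow_matching_using_colours[OF tf XN VN disj C'(1)])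
  show "\<forall>c\<in>C'. 4 * card C' \<le> card {(x, y). x \<in> X \<and> y \<in> V \<and> col x y = c}"
  proof
    fix c
    assume "c \<in> C'"
    then have "10 * \<nu> * real n \<le> real (card {(x, y). x \<in> X \<and> y \<in> V \<and> col x y = c})"
      using rep C'(1) unfolding replete_def by blast
    moreover have "0 \<le> \<nu> * real n"
      using C'(2) of_nat_0_le_iff order_trans by blast
    ultimately show "4 * card C' \<le> card {(x, y). x \<in> X \<and> y \<in> V \<and> col x y = c}"
      using C'(2) by linarith
  qed
  show "\<forall>x\<in>X. 3 * card X \<le> card {u \<in> V. u \<noteq> x \<and> col x u \<in> C}"
    using C X XN by fastforce
qed

theorem lemma4p4:
  shows "\<exists>K1 K2 K3 :: real. K1 > 0 \<and> K2 > 0 \<and> K3 > 0 \<and>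
    (\<forall>(n::nat) (\<nu>::real) (lam::real) (col :: nat \<Rightarrow> nat \<Rightarrow> nat)
        (X :: nat set) (V :: nat set) (C :: nat set) (C' :: nat set).
      0 < n \<and> 0 < \<nu> \<and> 0 < lam \<and>
      1 / real n \<le> \<nu> powr K1 / K1 \<and>
      \<nu> \<le> lam powr K2 / K2 \<and>
      lam \<le> 1 / K3 \<and>
      two_factorization (2*n+1) col \<and>
      X \<subseteq> {..<2*n+1} \<and> V \<subseteq> {..<2*n+1} \<and> X \<inter> V = {} \<and>
      replete (2*n+1) col (10 * \<nu> * real n) X V \<and>
      real (card X) \<le> lam * real n \<and>
      C \<subseteq> colour_set (2*n+1) col \<and>
      (\<forall>v<2*n+1. real (card {u \<in> V. u \<noteq> v \<and> col v u \<in> C}) \<ge> 3 * lam * real n) \<and>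
      C' \<subseteq> colour_set (2*n+1) col \<and> real (card C') \<le> \<nu> * real n
      \<longrightarrow> (\<exists>M. perfect_rainbow_matching col (C' \<union> C) X V M \<and>
                C' \<subseteq> (\<lambda>(x, y). col x y) ` M))"
  by (intro exI[of _ "1::real"] conjI zero_less_one allI impI, elim conjE)
    (rule ex_perfect_rainbow_matching_if_replete; assumption)

end
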